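(* Let $K$ be an algebraically closed field of characteristic $2$ and, for $c\in K$, let $X_c=\{c\,\sigma_1\sigma_3+\sigma_4=0\}\subset\mathbb{P}^3_K$. For every $c\neq0$, $X_c$ has exactly $10$ singular points, namely the $\mathfrak{S}_4$-orbits of $(0,0,1,1)$ and $(0,0,0,1)$, and all of them are nodes ($A_1$-singularities).
   Context: $\sigma_i$ is the $i$-th elementary symmetric polynomial in $x_1,\dots,x_4$; $\mathfrak{S}_4$ permutes coordinates. A node is a double point whose projectivized tangent cone is a smooth conic. *)

theory Defs
  imports "HOL-Analysis.Analysis" "HOL-Computational_Algebra.Polynomial"
begin

text \<open>Elementary symmetric polynomial sigma_k in the four coordinates x1..x4,
  evaluated over an arbitrary commutative ring (so that it can also be evaluated
  at polynomial arguments, for Taylor expansions).\<close>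
definition esym :: "nat \<Rightarrow> 'b::comm_ring_1 ^ 4 \<Rightarrow> 'b" where
  "esym k x = (\<Sum>S\<in>{S::4 set. card S = k}. \<Prod>i\<in>S. x $ i)"

definition quartic :: "'b::comm_ring_1 \<Rightarrow> 'b ^ 4 \<Rightarrow> 'b" where
  "quartic c x = c * esym 1 x * esym 3 x + esym 4 x"

text \<open>Taylor (Hasse) coefficient: the coefficient of t^k in F(p + t v).\<close>
definition taylor_coeff :: "'a::field \<Rightarrow> 'a ^ 4 \<Rightarrow> 'a ^ 4 \<Rightarrow> nat \<Rightarrow> 'a" where
  "taylor_coeff c p v k = coeff (quartic [:c:] (\<chi> i. [:p $ i, v $ i:])) k"

text \<open>p (nonzero, representing a point of P^3) is a singular point of X_c:
  it lies on X_c and all partial derivatives vanish (the linear term of the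
  expansion vanishes identically).\<close>
definition singular_point :: "'a::field \<Rightarrow> 'a ^ 4 \<Rightarrow> bool" where
  "singular_point c p \<longleftrightarrow> p \<noteq> 0 \<and> quartic c p = 0 \<and> (\<forall>v. taylor_coeff c p v 1 = 0)"

text \<open>Quadratic part of the expansion at p; at a singular point it is a quadratic
  form on K^4 / K p, whose zero locus in P(K^4/Kp) is the projectivized tangent cone.\<close>
definition tcone_form :: "'a::field \<Rightarrow> 'a ^ 4 \<Rightarrow> 'a ^ 4 \<Rightarrow> 'a" where
  "tcone_form c p v = taylor_coeff c p v 2"

text \<open>Node: a singular point whose projectivized tangent cone is a smooth conic,
  i.e. there is no point w of P(K^4/Kp) with Q(w) = 0 and all partial derivatives of Q
  at w zero (the partials of Q at w are the values of the polar form B(w,-)).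
  This also forces Q \<noteq> 0, i.e. the point is exactly a double point.\<close>
definition is_node :: "'a::field \<Rightarrow> 'a ^ 4 \<Rightarrow> bool" where
  "is_node c p \<longleftrightarrow> singular_point c p \<and>
     (\<forall>w. w \<notin> range (\<lambda>s. s *s p) \<longrightarrow>
        \<not> (tcone_form c p w = 0 \<and>
            (\<forall>u. tcone_form c p (w + u) - tcone_form c p w - tcone_form c p u = 0)))"

definition proj_pt :: "'a::field ^ 4 \<Rightarrow> ('a ^ 4) set" where
  "proj_pt p = {s *s p | s. s \<noteq> 0}"

definition perm_coords :: "(4 \<Rightarrow> 4) \<Rightarrow> 'a ^ 4 \<Rightarrow> 'a ^ 4" where
  "perm_coords \<sigma> x = (\<chi> i. x $ \<sigma> i)"

end

theory Submission
  imports Defs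
begin

text \<open>
  At a point p the partial derivative of F = c sigma_1 sigma_3 + sigma_4 with respect to x_i is g(p_i)
  for one cubic g whose coefficients are symmetric in p. Hence at a singular point every
  difference quotient of g between two distinct coordinates vanishes, and comparing the
  quotients for the pairs (1,2), (1,3), (1,4) shows that the four coordinates cannot be
  pairwise distinct. After permuting coordinates we may assume p_1 = p_2, and a short
  computation in characteristic 2 leaves only the multiples of the ten 0/1 vectors in the
  S_4-orbits of (0,0,1,1) and (0,0,0,1). At these two points the tangent cone is computed
  explicitly: its polar form vanishes identically only along the line through p, so the
  cone is a smooth conic.
\<close>

lemma vector_4 [simp]:
 "(vector [x,y,z,w] ::('a::zero)^4)$1 = x"
 "(vector [x,y,z,w] ::('a::zero)^4)$2 = y"
 "(vector [x,y,z,w] ::('a::zero)^4)$3 = z"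
 "(vector [x,y,z,w] ::('a::zero)^4)$4 = w"
  unfolding vector_def by simp_all

lemma card_subsets_4: "{S::4 set. card S = k} = {S \<in> Pow {1,2,3,4}. card S = k}"
  using UNIV_4 by auto

lemma Collect_eq_disj_conj: "{S. (S = a \<or> R S) \<and> Q S} = (if Q a then insert a else id) {S. R S \<and> Q S}"
  by auto

lemma Collect_eq_conj: "{S. S = a \<and> Q S} = (if Q a then {a} else {})"
  by auto

lemmas esym_simps = esym_def card_subsets_4 Pow_insert Collect_eq_disj_conj Collect_eq_conj

lemma esym_1: "esym 1 x = x$1 + x$2 + x$3 + x$4"
  by (simp add: esym_simps algebra_simps)

lemma esym_2: "esym 2 x = x$1*x$2 + x$1*x$3 + x$1*x$4 + x$2*x$3 + x$2*x$4 + x$3*x$4"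
  by (simp add: esym_simps algebra_simps doubleton_eq_iff)

lemma esym_3: "esym 3 x = x$1*x$2*x$3 + x$1*x$2*x$4 + x$1*x$3*x$4 + x$2*x$3*x$4"
  by (simp add: esym_simps algebra_simps set_eq_iff[of "{_,_,_}"] forall_4)

lemma esym_4: "esym 4 x = x$1*x$2*x$3*x$4"
  by (simp add: esym_simps algebra_simps)

lemma quartic_eq: "quartic c x = c * esym 1 x * esym 3 x + x$1*x$2*x$3*x$4"
  by (simp add: quartic_def esym_4)

section \<open>The partial derivatives as values of one cubic\<close>

(* From d sigma_3/d x_i = sigma_2 - sigma_1 x_i + x_i^2 and
   d sigma_4/d x_i = sigma_3 - sigma_2 x_i + sigma_1 x_i^2 - x_i^3. *)
definition partial_cubic :: "'a::comm_ring_1 \<Rightarrow> 'a ^ 4 \<Rightarrow> 'a \<Rightarrow> 'a" where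
  "partial_cubic c p x = c * (esym 3 p + esym 1 p * (esym 2 p - esym 1 p * x + x^2))
     + (esym 3 p - esym 2 p * x + esym 1 p * x^2 - x^3)"

lemma taylor_coeff_1:
  "taylor_coeff c p v 1 = v$1 * partial_cubic c p (p$1) + v$2 * partial_cubic c p (p$2)
     + v$3 * partial_cubic c p (p$3) + v$4 * partial_cubic c p (p$4)"
  unfolding taylor_coeff_def quartic_def esym_1 esym_3 esym_4
  apply (simp add: coeff_mult)
  unfolding partial_cubic_def esym_1 esym_2 esym_3
  by algebra

lemma singular_point_iff:
  "singular_point c p \<longleftrightarrow> p \<noteq> 0 \<and> quartic c p = 0 \<and> (\<forall>i. partial_cubic c p (p $ i) = 0)"
proof -
  have "(\<forall>v. taylor_coeff c p v 1 = 0) \<longleftrightarrow> (\<forall>i. partial_cubic c p (p $ i) = 0)"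
  proof
    assume "\<forall>v. taylor_coeff c p v 1 = 0"
    from this[rule_format, of "axis 1 1"] this[rule_format, of "axis 2 1"]
      this[rule_format, of "axis 3 1"] this[rule_format, of "axis 4 1"]
    show "\<forall>i. partial_cubic c p (p $ i) = 0"
      unfolding taylor_coeff_1 forall_4 by (simp add: axis_def)
  qed (unfold taylor_coeff_1, simp)
  then show ?thesis
    unfolding singular_point_def by blast
qed

definition partial_slope :: "'a::comm_ring_1 \<Rightarrow> 'a ^ 4 \<Rightarrow> 'a \<Rightarrow> 'a \<Rightarrow> 'a" where
  "partial_slope c p x y = x^2 + x*y + y^2 - (c + 1) * esym 1 p * (x + y) + c * (esym 1 p)^2 + esym 2 p"

lemma partial_cubic_diff:
  "partial_cubic c p x - partial_cubic c p y = (y - x) * partial_slope c p x y"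
  by (simp add: partial_cubic_def partial_slope_def algebra_simps power2_eq_square power3_eq_cube)

lemma partial_slope_diff:
  "partial_slope c p x y - partial_slope c p x z = (y - z) * (x + y + z - (c + 1) * esym 1 p)"
  by (simp add: partial_slope_def algebra_simps power2_eq_square)

lemma singular_point_slope:
  assumes "singular_point c p" and "p $ i \<noteq> p $ j"
  shows "partial_slope c p (p $ i) (p $ j) = 0"
  using partial_cubic_diff[of c p "p $ i" "p $ j"] assms by (simp add: singular_point_iff)

lemma singular_point_coords_not_distinct:
  fixes c :: "'a::field"
  assumes "singular_point c p"
  shows "\<exists>i j. i \<noteq> j \<and> p $ i = p $ j"
proof (rule ccontr)
  assume "\<not> ?thesis"
  then have distinct: "p $ i \<noteq> p $ j" if "i \<noteq> j" for i j
    using that by blast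
  have slope: "partial_slope c p (p $ 1) (p $ m) = 0" if "m \<noteq> 1" for m
    using singular_point_slope[OF assms distinct] that by simp
  let ?K = "(c + 1) * esym 1 p"
  have "p $ 1 + p $ 2 + p $ m = ?K" if "m \<noteq> 1" "m \<noteq> 2" for m
  proof -
    have "(p $ 2 - p $ m) * (p $ 1 + p $ 2 + p $ m - ?K) = 0"
      using partial_slope_diff[of c p "p $ 1" "p $ 2" "p $ m"] slope[of 2] slope[of m] that by simp
    moreover have "p $ 2 - p $ m \<noteq> 0"
      using distinct[of 2 m] that by simp
    ultimately show ?thesis
      by simp
  qed
  from this[of 3] this[of 4] have "p $ 1 + p $ 2 + p $ 3 = p $ 1 + p $ 2 + p $ 4"
    by simp
  then have "p $ 3 = p $ 4"
    by simp
  with distinct[of 3 4] show False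
    by simp
qed

section \<open>Permuting the coordinates\<close>

lemma perm_coords_nth [simp]: "perm_coords \<sigma> x $ i = x $ \<sigma> i"
  by (simp add: perm_coords_def)

lemma perm_coords_comp: "perm_coords \<sigma> (perm_coords \<tau> x) = perm_coords (\<tau> \<circ> \<sigma>) x"
  by (simp add: vec_eq_iff)

lemma perm_coords_inv:
  assumes "\<sigma> permutes UNIV"
  shows "perm_coords \<sigma> (perm_coords (inv \<sigma>) x) = x" "perm_coords (inv \<sigma>) (perm_coords \<sigma> x) = x"
  using assms by (simp_all add: vec_eq_iff permutes_inverses)

lemma perm_coords_add: "perm_coords \<sigma> (x + y) = perm_coords \<sigma> x + perm_coords \<sigma> y"
  by (simp add: vec_eq_iff)

lemma perm_coords_smult: "perm_coords \<sigma> (s *s x) = s *s perm_coords \<sigma> x"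
  by (simp add: vec_eq_iff)

lemma perm_coords_eq_0_iff:
  assumes "\<sigma> permutes UNIV"
  shows "perm_coords \<sigma> x = 0 \<longleftrightarrow> x = 0"
  by (metis assms perm_coords_inv(2) vec_eq_iff perm_coords_nth zero_index)

lemma esym_perm_coords:
  assumes "\<sigma> permutes (UNIV :: 4 set)"
  shows "esym k (perm_coords \<sigma> x) = esym k x"
proof -
  have inj: "inj \<sigma>"
    using assms permutes_inj by blast
  let ?A = "{S::4 set. card S = k}"
  have "image \<sigma> ` ?A = ?A"
  proof
    show "image \<sigma> ` ?A \<subseteq> ?A"
      using inj by (auto simp: card_image inj_on_subset)
    show "?A \<subseteq> image \<sigma> ` ?A"
    proof
      fix T assume "T \<in> ?A"
      moreover have "T = \<sigma> ` (inv \<sigma> ` T)"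
        using assms by (simp add: image_comp permutes_inverses(1) o_def)
      moreover have "inj (inv \<sigma>)"
        using assms by (meson permutes_inj permutes_inv)
      ultimately show "T \<in> image \<sigma> ` ?A"
        by (metis (mono_tags, lifting) card_image inj_on_subset mem_Collect_eq subset_UNIV image_eqI)
    qed
  qed
  then have "esym k x = (\<Sum>T\<in>image \<sigma> ` ?A. \<Prod>j\<in>T. x $ j)"
    by (simp add: esym_def)
  also have "\<dots> = (\<Sum>S\<in>?A. \<Prod>j\<in>\<sigma> ` S. x $ j)"
    by (rule sum.reindex[unfolded o_def]) (simp add: inj_on_def inj_image_eq_iff[OF inj])
  also have "\<dots> = esym k (perm_coords \<sigma> x)"
    unfolding esym_def by (rule sum.cong[OF refl]) (simp add: prod.reindex inj_on_subset[OF inj])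
  finally show ?thesis ..
qed

lemma quartic_perm_coords: "\<sigma> permutes UNIV \<Longrightarrow> quartic c (perm_coords \<sigma> x) = quartic c x"
  by (simp add: quartic_def esym_perm_coords)

lemma taylor_coeff_perm_coords:
  assumes "\<sigma> permutes UNIV"
  shows "taylor_coeff c (perm_coords \<sigma> p) (perm_coords \<sigma> v) k = taylor_coeff c p v k"
proof -
  have "(\<chi> i. [:perm_coords \<sigma> p $ i, perm_coords \<sigma> v $ i:]) = perm_coords \<sigma> (\<chi> i. [:p $ i, v $ i:])"
    by (simp add: vec_eq_iff)
  then show ?thesis
    unfolding taylor_coeff_def by (simp add: quartic_perm_coords[OF assms])
qed

lemma singular_point_perm_coords:
  assumes \<sigma>: "\<sigma> permutes UNIV" and "singular_point c p"
  shows "singular_point c (perm_coords \<sigma> p)"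
proof -
  have "taylor_coeff c (perm_coords \<sigma> p) v 1 = 0" for v
    using taylor_coeff_perm_coords[OF \<sigma>, of c p "perm_coords (inv \<sigma>) v" 1] assms(2)
    by (simp add: perm_coords_inv(1)[OF \<sigma>] singular_point_def)
  then show ?thesis
    using assms by (simp add: singular_point_def perm_coords_eq_0_iff quartic_perm_coords)
qed

lemma is_node_perm_coords:
  assumes \<sigma>: "\<sigma> permutes UNIV" and node: "is_node c p"
  shows "is_node c (perm_coords \<sigma> p)"
  unfolding is_node_def
proof (intro conjI allI impI notI)
  show "singular_point c (perm_coords \<sigma> p)"
    using singular_point_perm_coords[OF \<sigma>] node unfolding is_node_def by blast
  have tc: "tcone_form c (perm_coords \<sigma> p) (perm_coords \<sigma> x) = tcone_form c p x" for x
    unfolding tcone_form_def by (rule taylor_coeff_perm_coords[OF \<sigma>])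
  fix w
  assume off_line: "w \<notin> range (\<lambda>s. s *s perm_coords \<sigma> p)"
    and cone: "tcone_form c (perm_coords \<sigma> p) w = 0 \<and>
       (\<forall>u. tcone_form c (perm_coords \<sigma> p) (w + u) - tcone_form c (perm_coords \<sigma> p) w
          - tcone_form c (perm_coords \<sigma> p) u = 0)"
  define w' where "w' = perm_coords (inv \<sigma>) w"
  have w: "w = perm_coords \<sigma> w'"
    unfolding w'_def by (simp only: perm_coords_inv(1)[OF \<sigma>])
  have "w' \<notin> range (\<lambda>s. s *s p)"
    using off_line by (auto simp: w perm_coords_smult)
  moreover have "tcone_form c p (w' + u) - tcone_form c p w' - tcone_form c p u = 0" for u
    using cone[THEN conjunct2, rule_format, of "perm_coords \<sigma> u"]
    unfolding w perm_coords_add[symmetric] tc .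
  ultimately show False
    using node cone tc unfolding is_node_def w by metis
qed

lemma exists_permutes_map_pair:
  assumes "a \<noteq> b" and "x \<noteq> y"
  shows "\<exists>\<sigma>. \<sigma> permutes UNIV \<and> \<sigma> a = x \<and> \<sigma> b = y"
proof -
  let ?\<sigma> = "Transposition.transpose a x \<circ> Transposition.transpose b (Transposition.transpose a x y)"
  have "?\<sigma> permutes UNIV"
    by (simp add: permutes_compose permutes_swap_id)
  moreover have "?\<sigma> a = x" "?\<sigma> b = y"
    using assms by (auto simp: Transposition.transpose_def)
  ultimately show ?thesis
    by blast
qed

section \<open>Classification of the singular points in characteristic 2\<close>

definition singular_reps :: "('a::zero_neq_one ^ 4) set" where
  "singular_reps = {vector [0,0,1,1], vector [0,1,0,1], vector [1,0,0,1], vector [0,1,1,0], vector [1,0,1,0],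
           vector [1,1,0,0], vector [0,0,0,1], vector [0,0,1,0], vector [0,1,0,0], vector [1,0,0,0]}"

lemma vec4_eq_vector_iff:
  "(x :: 'a::zero ^ 4) = vector [a, b, c, d] \<longleftrightarrow> x $ 1 = a \<and> x $ 2 = b \<and> x $ 3 = c \<and> x $ 4 = d"
  by (auto simp: vec_eq_iff forall_4)

lemma card_singular_reps: "card (singular_reps :: ('a::zero_neq_one ^ 4) set) = 10"
  by (simp add: singular_reps_def vec4_eq_vector_iff)

lemma singular_reps_transpose:
  "r \<in> singular_reps \<Longrightarrow> perm_coords (Transposition.transpose i j) r \<in> singular_reps"
  unfolding singular_reps_def using exhaust_4[of i] exhaust_4[of j]
  by (elim disjE) (auto simp: vec4_eq_vector_iff Transposition.transpose_def)

lemma singular_reps_perm_coords: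
  assumes "\<sigma> permutes UNIV" and "r \<in> singular_reps"
  shows "perm_coords \<sigma> r \<in> singular_reps"
  using assms(1) finite_class.finite_UNIV assms(2)
proof (induction \<sigma> arbitrary: r rule: permutes_induct)
  case id
  then show ?case
    by (simp add: perm_coords_def)
next
  case (swap a b \<sigma>)
  have "perm_coords (Transposition.transpose a b \<circ> \<sigma>) r
      = perm_coords \<sigma> (perm_coords (Transposition.transpose a b) r)"
    by (simp only: perm_coords_comp)
  then show ?case
    by (simp only:) (intro swap.IH singular_reps_transpose swap.prems)
qed

lemma singular_reps_eq_orbits:
  "singular_reps = {perm_coords \<sigma> a | \<sigma> a. \<sigma> permutes UNIV \<and> a \<in> {vector [0,0,1,1], vector [0,0,0,1]}}"
  (is "_ = ?orbits")
proof
  show "?orbits \<subseteq> singular_reps"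
  proof
    fix x assume "x \<in> ?orbits"
    then obtain \<sigma> a where "\<sigma> permutes UNIV" "a \<in> {vector [0,0,1,1], vector [0,0,0,1]}" "x = perm_coords \<sigma> a"
      by blast
    then show "x \<in> singular_reps"
      using singular_reps_perm_coords by (auto simp: singular_reps_def)
  qed
  let ?e34 = "vector [0,0,1,1] :: 'a ^ 4" and ?e4 = "vector [0,0,0,1] :: 'a ^ 4"
  have orbit: "perm_coords \<tau> a \<in> ?orbits" if "\<tau> permutes UNIV" "a \<in> {?e34, ?e4}" for \<tau> a
    using that by blast
  have base: "?e34 \<in> ?orbits" "?e4 \<in> ?orbits"
    using orbit[OF permutes_id] by (simp_all add: perm_coords_def)
  have swaps: "Transposition.transpose i j permutes UNIV"
    "Transposition.transpose i j \<circ> Transposition.transpose k l permutes UNIV" for i j k l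
    by (simp_all add: permutes_compose permutes_swap_id)
  have "vector [0,1,0,1] = perm_coords (Transposition.transpose 2 3) ?e34"
    "vector [1,0,0,1] = perm_coords (Transposition.transpose 1 3) ?e34"
    "vector [0,1,1,0] = perm_coords (Transposition.transpose 2 4) ?e34"
    "vector [1,0,1,0] = perm_coords (Transposition.transpose 1 4) ?e34"
    "vector [1,1,0,0] = perm_coords (Transposition.transpose 1 3 \<circ> Transposition.transpose 2 4) ?e34"
    "vector [0,0,1,0] = perm_coords (Transposition.transpose 3 4) ?e4"
    "vector [0,1,0,0] = perm_coords (Transposition.transpose 2 4) ?e4"
    "vector [1,0,0,0] = perm_coords (Transposition.transpose 1 4) ?e4"
    by (simp_all add: vec_eq_iff forall_4 Transposition.transpose_def)
  then show "singular_reps \<subseteq> ?orbits"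
    unfolding singular_reps_def insert_subset by (simp only: base) (auto intro!: orbit swaps)
qed

lemma char2_uminus: "(2::'a::comm_ring_1) = 0 \<Longrightarrow> - x = (x::'a)"
  by (metis add_eq_0_iff2 mult_2 mult_zero_left)

lemma singular_point_equal_coords:
  fixes c :: "'a::field"
  assumes two: "(2::'a) = 0" and "c \<noteq> 0" and sing: "singular_point c q" and "q $ 1 = q $ 2"
  shows "\<exists>t r. t \<noteq> 0 \<and> r \<in> singular_reps \<and> q = t *s r"
proof -
  have neg: "- x = x" and two_x: "2 * x = 0" "x * 2 = 0" for x :: 'a
    using char2_uminus[OF two] two by simp_all
  obtain a u v where q: "q = vector [a, a, u, v]"
    using assms(4) by (metis vec4_eq_vector_iff)
  have q_nz: "\<not> (a = 0 \<and> u = 0 \<and> v = 0)"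
    using sing by (auto simp: singular_point_def q vec_eq_iff forall_4)
  have "a + a = 0"
    using two by (metis mult_2 mult_zero_left)
  then have sum: "esym 1 q = u + v"
    unfolding esym_1 by (simp add: q)
  have multiple: "\<exists>t r. t \<noteq> 0 \<and> r \<in> singular_reps \<and> q = t *s r"
    if "t \<noteq> 0" "r \<in> singular_reps" "q = t *s r" for t r
    using that by blast
  show ?thesis
  proof (cases "u + v = 0")
    case True
    then have "u = v"
      by (metis add_eq_0_iff2 neg)
    moreover have "quartic c q = 0"
      using sing by (simp add: singular_point_def)
    ultimately have "a = 0 \<or> u = 0"
      using True sum two by (simp add: quartic_eq q)
    then show ?thesis
    proof
      assume "a = 0"
      with q_nz \<open>u = v\<close> show ?thesis
        by (intro multiple[of u "vector [0,0,1,1]"]) (auto simp: singular_reps_def q vec_eq_iff forall_4)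
    next
      assume "u = 0"
      with q_nz \<open>u = v\<close> show ?thesis
        by (intro multiple[of a "vector [1,1,0,0]"]) (auto simp: singular_reps_def q vec_eq_iff forall_4)
    qed
  next
    case False
    have "partial_slope c q u v = a^2"
      unfolding partial_slope_def sum by (simp add: esym_2 q algebra_simps power2_eq_square two_x)
    moreover have "u \<noteq> v"
      using False by (metis two_x(1) mult_2)
    ultimately have a0: "a = 0"
      using singular_point_slope[OF sing, of 3 4] by (simp add: q)
    have v0: "v = 0" if "u \<noteq> 0"
    proof -
      have "partial_slope c q 0 u = c * v * (u + v)"
        unfolding partial_slope_def sum by (simp add: esym_2 q a0 algebra_simps power2_eq_square two_x)
      then show ?thesis
        using singular_point_slope[OF sing, of 1 3] that False \<open>c \<noteq> 0\<close> by (simp add: q a0)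
    qed
    show ?thesis
    proof (cases "u = 0")
      case True
      with \<open>u + v \<noteq> 0\<close> a0 show ?thesis
        by (intro multiple[of v "vector [0,0,0,1]"]) (auto simp: singular_reps_def q vec_eq_iff forall_4)
    next
      case False
      with v0 a0 show ?thesis
        by (intro multiple[of u "vector [0,0,1,0]"]) (auto simp: singular_reps_def q vec_eq_iff forall_4)
    qed
  qed
qed

lemma singular_point_imp_smult_singular_reps:
  fixes c :: "'a::field"
  assumes "(2::'a) = 0" and "c \<noteq> 0" and sing: "singular_point c p"
  shows "\<exists>t r. t \<noteq> 0 \<and> r \<in> singular_reps \<and> p = t *s r"
proof -
  obtain i j where "i \<noteq> j" "p $ i = p $ j"
    using singular_point_coords_not_distinct[OF sing] by blast
  moreover obtain \<sigma> where \<sigma>: "\<sigma> permutes UNIV" "\<sigma> 1 = i" "\<sigma> 2 = j"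
    using exists_permutes_map_pair[of 1 2 i j] \<open>i \<noteq> j\<close> by auto
  ultimately obtain t r where "t \<noteq> 0" "r \<in> singular_reps" "perm_coords \<sigma> p = t *s r"
    using singular_point_equal_coords[OF assms(1,2) singular_point_perm_coords[OF \<sigma>(1) sing]] by auto
  then have "p = t *s perm_coords (inv \<sigma>) r"
    using perm_coords_inv(2)[OF \<sigma>(1), of p] by (simp add: perm_coords_smult)
  then show ?thesis
    using \<open>t \<noteq> 0\<close> singular_reps_perm_coords[OF permutes_inv[OF \<sigma>(1)] \<open>r \<in> singular_reps\<close>] by blast
qed

section \<open>The singular points are nodes\<close>

lemma tcone_form_0011:
  "tcone_form c (t *s vector [0,0,1,1]) w
    = t^2 * (w$1 * w$2 + c * (w$1 + w$2) * (w$1 + w$2 + w$3 + w$4))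
      + 2 * c * t^2 * ((w$1 + w$2) * (w$3 + w$4) + 2 * w$1 * w$2)"
  unfolding tcone_form_def taylor_coeff_def quartic_def esym_1 esym_3 esym_4
  by (simp add: coeff_mult numeral_2_eq_2 algebra_simps)

lemma tcone_form_0001:
  "tcone_form c (t *s vector [0,0,0,1]) w = c * t^2 * (w$1 * w$2 + w$1 * w$3 + w$2 * w$3)"
  unfolding tcone_form_def taylor_coeff_def quartic_def esym_1 esym_3 esym_4
  by (simp add: coeff_mult numeral_2_eq_2 algebra_simps)

lemma singular_point_0011:
  assumes "(2::'a::field) = 0"
  shows "singular_point c (t *s vector [0,0,1,1] :: 'a ^ 4) \<longleftrightarrow> t \<noteq> 0"
proof -
  have "t + t = 0"
    using assms by (metis mult_2 mult_zero_left)
  then show ?thesis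
    unfolding singular_point_iff quartic_def partial_cubic_def esym_1 esym_2 esym_3 esym_4
    by (simp add: vec_eq_iff forall_4 algebra_simps power2_eq_square power3_eq_cube)
qed

lemma singular_point_0001:
  "singular_point c (t *s vector [0,0,0,1] :: 'a::field ^ 4) \<longleftrightarrow> t \<noteq> 0"
  unfolding singular_point_iff quartic_def partial_cubic_def esym_1 esym_2 esym_3 esym_4
  by (simp add: vec_eq_iff forall_4 algebra_simps power2_eq_square power3_eq_cube)

lemma is_nodeI:
  assumes "singular_point c p"
    and "\<And>w. tcone_form c p w = 0 \<Longrightarrow>
      (\<And>u. tcone_form c p (w + u) - tcone_form c p w - tcone_form c p u = 0) \<Longrightarrow>
      w \<in> range (\<lambda>s. s *s p)"
  shows "is_node c p"
  using assms unfolding is_node_def by blast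

lemma is_node_0011:
  fixes c t :: "'a::field"
  assumes two: "(2::'a) = 0" and "c \<noteq> 0" and "t \<noteq> 0"
  shows "is_node c (t *s vector [0,0,1,1])"
proof (rule is_nodeI)
  show "singular_point c (t *s vector [0,0,1,1])"
    using singular_point_0011[OF two] \<open>t \<noteq> 0\<close> by blast
  have neg: "- x = x" for x :: 'a
    using char2_uminus[OF two] .
  let ?Q = "tcone_form c (t *s vector [0,0,1,1])"
  fix w :: "'a ^ 4"
  assume cone: "?Q w = 0" and polar: "\<And>u. ?Q (w + u) - ?Q w - ?Q u = 0"
  have "?Q (w + axis 3 1) - ?Q w - ?Q (axis 3 1) = c * t^2 * (w$1 + w$2)"
    using two by (simp add: tcone_form_0011 axis_def algebra_simps power2_eq_square)
  then have "w$1 + w$2 = 0"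
    using polar \<open>c \<noteq> 0\<close> \<open>t \<noteq> 0\<close> by simp
  then have "w$2 = w$1"
    by (metis add_eq_0_iff2 neg)
  with cone have "w$1 = 0" "w$2 = 0"
    using two \<open>t \<noteq> 0\<close> by (simp_all add: tcone_form_0011)
  moreover have "?Q (w + axis 1 1) - ?Q w - ?Q (axis 1 1) = c * t^2 * (w$3 + w$4)"
    using two \<open>w$1 = 0\<close> \<open>w$2 = 0\<close> by (simp add: tcone_form_0011 axis_def algebra_simps power2_eq_square)
  then have "w$4 = w$3"
    using polar \<open>c \<noteq> 0\<close> \<open>t \<noteq> 0\<close> by (metis add_eq_0_iff2 neg mult_eq_0_iff power_eq_0_iff)
  ultimately have "w = (w$3 / t) *s (t *s vector [0,0,1,1])"
    using \<open>t \<noteq> 0\<close> by (simp add: vec_eq_iff forall_4)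
  then show "w \<in> range (\<lambda>s. s *s (t *s vector [0,0,1,1]))"
    by blast
qed

lemma is_node_0001:
  fixes c t :: "'a::field"
  assumes "c \<noteq> 0" and "t \<noteq> 0"
  shows "is_node c (t *s vector [0,0,0,1])"
proof (rule is_nodeI)
  show "singular_point c (t *s vector [0,0,0,1])"
    using singular_point_0001 \<open>t \<noteq> 0\<close> by blast
  let ?Q = "tcone_form c (t *s vector [0,0,0,1])"
  fix w :: "'a ^ 4"
  assume cone: "?Q w = 0" and polar: "\<And>u. ?Q (w + u) - ?Q w - ?Q u = 0"
  have "?Q (w + axis i 1) - ?Q w - ?Q (axis i 1) = c * t^2 * (w$1 + w$2 + w$3 - w$i)" if "i \<noteq> 4" for i
    using that exhaust_4[of i] by (auto simp: tcone_form_0001 axis_def algebra_simps power2_eq_square)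
  from this[of 1] this[of 2] have "w$1 = - w$3" "w$2 = - w$3"
    using polar \<open>c \<noteq> 0\<close> \<open>t \<noteq> 0\<close> by (simp_all add: eq_neg_iff_add_eq_0)
  with cone have "w$3 = 0"
    using \<open>c \<noteq> 0\<close> \<open>t \<noteq> 0\<close> by (simp add: tcone_form_0001)
  then have "w = (w$4 / t) *s (t *s vector [0,0,0,1])"
    using \<open>w$1 = - w$3\<close> \<open>w$2 = - w$3\<close> \<open>t \<noteq> 0\<close> by (simp add: vec_eq_iff forall_4)
  then show "w \<in> range (\<lambda>s. s *s (t *s vector [0,0,0,1]))"
    by blast
qed

lemma is_node_smult_singular_reps:
  fixes c t :: "'a::field"
  assumes "(2::'a) = 0" and "c \<noteq> 0" and "t \<noteq> 0" and "r \<in> singular_reps"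
  shows "is_node c (t *s r)"
proof -
  obtain \<sigma> a where \<sigma>: "\<sigma> permutes UNIV" and "a \<in> {vector [0,0,1,1], vector [0,0,0,1]}"
    and r: "r = perm_coords \<sigma> a"
    using assms(4) unfolding singular_reps_eq_orbits by blast
  then have "is_node c (t *s a)"
    using is_node_0011[OF assms(1-3)] is_node_0001[OF assms(2,3)] by blast
  then show ?thesis
    using is_node_perm_coords[OF \<sigma>] by (simp add: r flip: perm_coords_smult)
qed

lemma singular_point_iff_smult_singular_reps:
  fixes c :: "'a::field"
  assumes "(2::'a) = 0" and "c \<noteq> 0"
  shows "singular_point c p \<longleftrightarrow> (\<exists>t r. t \<noteq> 0 \<and> r \<in> singular_reps \<and> p = t *s r)"
proof
  assume "\<exists>t r. t \<noteq> 0 \<and> r \<in> singular_reps \<and> p = t *s r"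
  then obtain t r where "t \<noteq> 0" "r \<in> singular_reps" "p = t *s r"
    by blast
  then show "singular_point c p"
    using is_node_smult_singular_reps[OF assms] by (simp add: is_node_def)
qed (rule singular_point_imp_smult_singular_reps[OF assms])

lemma proj_pt_smult:
  assumes "t \<noteq> 0"
  shows "proj_pt (t *s p) = proj_pt p"
proof -
  have "s *s (t *s p) \<in> proj_pt p" if "s \<noteq> 0" for s
    unfolding proj_pt_def using that assms by (auto simp: vector_smult_assoc intro!: exI[of _ "s * t"])
  moreover have "s *s p \<in> proj_pt (t *s p)" if "s \<noteq> 0" for s
    unfolding proj_pt_def using that assms by (auto simp: vector_smult_assoc intro!: exI[of _ "s / t"])
  ultimately show ?thesis
    unfolding proj_pt_def by blast
qed

lemma inj_on_proj_pt_singular_reps: "inj_on proj_pt (singular_reps :: ('a::field ^ 4) set)"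
proof (rule inj_onI)
  fix r r' :: "'a ^ 4"
  assume r: "r \<in> singular_reps" and r': "r' \<in> singular_reps" and "proj_pt r = proj_pt r'"
  moreover have "r \<in> proj_pt r"
    unfolding proj_pt_def by (auto intro: exI[of _ 1])
  ultimately obtain s where rs: "r = s *s r'"
    unfolding proj_pt_def by blast
  have "\<not> (\<forall>i. r' $ i \<noteq> 1)"
    using r' unfolding singular_reps_def by (auto simp: forall_4)
  then obtain i where "r' $ i = 1"
    by blast
  then have "r $ i = s"
    using rs by simp
  moreover have "r $ i = 0 \<or> r $ i = 1"
    using r exhaust_4[of i] unfolding singular_reps_def by auto
  moreover have "r \<noteq> 0"
    using r unfolding singular_reps_def by (auto simp: vec_eq_iff forall_4)
  ultimately have "s = 1"
    using rs by force
  then show "r = r'"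
    using rs by simp
qed

lemma proj_singular_points:
  fixes c :: "'a::field"
  assumes "(2::'a) = 0" and "c \<noteq> 0"
  shows "{proj_pt p | p. singular_point c p} = proj_pt ` singular_reps"
proof (intro equalityI subsetI)
  fix x :: "('a ^ 4) set"
  assume "x \<in> {proj_pt p | p. singular_point c p}"
  then obtain t r where "t \<noteq> 0" "r \<in> singular_reps" "x = proj_pt (t *s r)"
    unfolding singular_point_iff_smult_singular_reps[OF assms] by blast
  then show "x \<in> proj_pt ` singular_reps"
    by (simp add: proj_pt_smult)
next
  fix x :: "('a ^ 4) set"
  assume "x \<in> proj_pt ` singular_reps"
  then obtain r where "r \<in> singular_reps" "x = proj_pt r"
    by blast
  moreover have "singular_point c r"
    unfolding singular_point_iff_smult_singular_reps[OF assms]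
    using \<open>r \<in> singular_reps\<close> by (intro exI[of _ 1] exI[of _ r]) simp
  ultimately show "x \<in> {proj_pt p | p. singular_point c p}"
    by blast
qed

theorem proposition4p7:
  fixes c :: "'a::alg_closed_field"
  assumes "CHAR('a) = 2" and "c \<noteq> 0"
  shows "{proj_pt p | p. singular_point c p} =
           {proj_pt (perm_coords \<sigma> a) | \<sigma> a. \<sigma> permutes (UNIV :: 4 set) \<and>
               a \<in> {vector [0, 0, 1, 1], vector [0, 0, 0, 1]}}
       \<and> card {proj_pt p | p. singular_point c p} = 10
       \<and> (\<forall>p. singular_point c p \<longrightarrow> is_node c p)"
proof -
  have two: "(2::'a) = 0"
    using of_nat_CHAR[where 'a='a] assms(1) by simp
  have orbits: "{proj_pt (perm_coords \<sigma> a) | \<sigma> a. \<sigma> permutes (UNIV :: 4 set) \<and>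
      a \<in> {vector [0, 0, 1, 1], vector [0, 0, 0, 1]}} = proj_pt ` singular_reps"
    unfolding singular_reps_eq_orbits by blast
  have "card (proj_pt ` (singular_reps :: ('a ^ 4) set)) = 10"
    by (simp add: card_image[OF inj_on_proj_pt_singular_reps] card_singular_reps)
  moreover have "is_node c p" if "singular_point c p" for p
    using that is_node_smult_singular_reps[OF two assms(2)]
    unfolding singular_point_iff_smult_singular_reps[OF two assms(2)] by blast
  ultimately show ?thesis
    unfolding proj_singular_points[OF two assms(2)] orbits by simp
qed

end
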